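(* Let $m,n\ge2$ with $1/m+1/n<1$, $0<|\lambda|<1/(2^mn^2)$, and $P_\lambda(z)=\dfrac{\frac1n((1+z)^n-1)+\lambda^{m+n}z^{m+n}}{1-\lambda^{m+n}z^{m+n}}$. Put $r_0=(n/m)^{1/(m+n)}$ and $\widetilde w_j=\frac{r_0}{\lambda}\exp\!\big(\pi\mathrm{i}\tfrac{2j-1}{m+n}\big)$ for $1\le j\le m+n$. Then for each $j$ there is a critical point $w_j$ of $P_\lambda$ (a zero of $E_\lambda(z)=(1+z)^{n-1}+\lambda^{m+n}z^{m+n-1}\{(1+\frac mn)[(1+z)^n+n-1]-z(1+z)^{n-1}\}$) with $|w_j-\widetilde w_j|<2(m+n)/m$, and $w_i=w_j$ if and only if $i=j$. *)

theory Defs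
  imports Complex_Main
begin

definition P_lam :: "nat \<Rightarrow> nat \<Rightarrow> complex \<Rightarrow> complex \<Rightarrow> complex" where
  "P_lam m n lam z =
     ((1 / of_nat n) * ((1 + z) ^ n - 1) + lam ^ (m + n) * z ^ (m + n))
     / (1 - lam ^ (m + n) * z ^ (m + n))"

text \<open>E_lambda: its zeros are the (free) critical points of P_lambda.\<close>
definition E_lam :: "nat \<Rightarrow> nat \<Rightarrow> complex \<Rightarrow> complex \<Rightarrow> complex" where
  "E_lam m n lam z =
     (1 + z) ^ (n - 1) + lam ^ (m + n) * z ^ (m + n - 1) *
       ((1 + of_nat m / of_nat n) * ((1 + z) ^ n + of_nat n - 1) - z * (1 + z) ^ (n - 1))"

definition r0 :: "nat \<Rightarrow> nat \<Rightarrow> real" where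
  "r0 m n = (real n / real m) powr (1 / real (m + n))"

definition w_tilde :: "nat \<Rightarrow> nat \<Rightarrow> complex \<Rightarrow> nat \<Rightarrow> complex" where
  "w_tilde m n lam j =
     complex_of_real (r0 m n) / lam
       * exp (complex_of_real pi * \<i> * of_nat (2 * j - 1) / of_nat (m + n))"

end

theory Submission
  imports Defs "HOL-Analysis.Analysis"
begin

text \<open>
  Let N = m + n. The points w_tilde j are the solutions a of lam^N a^N = -n/m; they form
  a regular N-gon of radius A = r0/|lam|, and the smallness of lam gives m A \<ge> 9 N.
  Put z = a (1 + t). Using lam^N a^N = -n/m, the equation m z E(z) = 0 becomes
  K = (1 + t)^N (K + R), where K = m z (1 + z)^(n-1) dominates and R/K = O(N/(m A)).
  Isolating the linear term N t of (1 + t)^N turns this into a fixed-point equation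
  t = F t, and F maps the disc |t| \<le> 5/(2 m A) into itself; Brouwer's theorem then gives
  a zero of E within 5/(2m) of every vertex. Distinct vertices are at distance at least
  2 A sin (\<pi>/N) \<ge> 2A/N \<ge> 18/m, so these zeros are pairwise distinct.
\<close>

lemma norm_power_one_plus_minus_linear_le:
  fixes t :: complex
  shows "cmod ((1 + t) ^ k - 1 - of_nat k * t) \<le> real k ^ 2 / 2 * cmod t ^ 2 * (1 + cmod t) ^ k"
proof (induction k)
  case 0
  then show ?case by simp
next
  case (Suc k)
  have eq: "(1 + t) ^ Suc k - 1 - of_nat (Suc k) * t
      = (1 + t) * ((1 + t) ^ k - 1 - of_nat k * t) + of_nat k * t ^ 2"
    by (simp add: algebra_simps power2_eq_square)
  have "cmod ((1 + t) ^ Suc k - 1 - of_nat (Suc k) * t)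
      \<le> cmod (1 + t) * cmod ((1 + t) ^ k - 1 - of_nat k * t) + real k * cmod t ^ 2"
    unfolding eq by (rule order_trans[OF norm_triangle_ineq]) (simp add: norm_mult norm_power)
  also have "\<dots> \<le> (1 + cmod t) * (real k ^ 2 / 2 * cmod t ^ 2 * (1 + cmod t) ^ k)
                  + real k * cmod t ^ 2 * (1 + cmod t) ^ Suc k"
  proof (rule add_mono)
    show "cmod (1 + t) * cmod ((1 + t) ^ k - 1 - of_nat k * t)
        \<le> (1 + cmod t) * (real k ^ 2 / 2 * cmod t ^ 2 * (1 + cmod t) ^ k)"
      by (rule mult_mono[OF _ Suc.IH]) (auto intro: norm_triangle_le)
    have "1 \<le> (1 + cmod t) ^ Suc k" by (rule one_le_power) simp
    then show "real k * cmod t ^ 2 \<le> real k * cmod t ^ 2 * (1 + cmod t) ^ Suc k"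
      using mult_left_mono[of 1 _ "real k * cmod t ^ 2"] by simp
  qed
  also have "\<dots> = (real k ^ 2 / 2 + real k) * cmod t ^ 2 * (1 + cmod t) ^ Suc k"
    by (simp add: algebra_simps)
  also have "\<dots> \<le> real (Suc k) ^ 2 / 2 * cmod t ^ 2 * (1 + cmod t) ^ Suc k"
    by (intro mult_right_mono) (auto simp: power2_eq_square algebra_simps)
  finally show ?case .
qed

lemma one_plus_power_mult_one_minus_le_one:
  fixes s :: real
  assumes "0 \<le> s" "s \<le> 1"
  shows "(1 + s) ^ N * (1 - real N * s) \<le> 1"
proof -
  have "(1 + s) ^ N * (1 - real N * s) \<le> (1 + s) ^ N * (1 - s) ^ N"
    using Bernoulli_inequality[of "-s" N] assms by (intro mult_left_mono) auto
  also have "\<dots> = (1 - s ^ 2) ^ N"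
    by (simp add: power_mult_distrib[symmetric] algebra_simps power2_eq_square)
  also have "\<dots> \<le> 1"
    using assms by (intro power_le_one) (auto simp: power2_eq_square mult_le_one)
  finally show ?thesis .
qed

lemma sin_ge_third:
  fixes v :: real
  assumes "0 \<le> v" "v \<le> 2"
  shows "v / 3 \<le> sin v"
proof -
  have "\<bar>sin v - (\<Sum>k<3. sin_coeff k * v ^ k)\<bar> \<le> inverse (fact 3) * \<bar>v\<bar> ^ 3"
    by (rule Maclaurin_sin_bound)
  moreover have "(\<Sum>k<3. sin_coeff k * v ^ k) = v"
    by (simp add: numeral_3_eq_3 sin_coeff_def)
  ultimately have "v - v ^ 3 / 6 \<le> sin v"
    using assms by (simp add: fact_numeral abs_if split: if_splits)
  moreover have "v ^ 3 \<le> v * 4"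
  proof -
    have "v * v \<le> 4" using assms mult_mono[of v 2 v 2] by simp
    then show ?thesis using assms mult_left_mono[of "v * v" 4 v] by (simp add: power3_eq_cube mult.assoc)
  qed
  ultimately show ?thesis by simp
qed

lemma sin_pi_mult_div_ge:
  fixes k N :: nat
  assumes "0 < k" "2 * k \<le> N"
  shows "1 / real N \<le> sin (pi * real k / real N)"
proof -
  define u where "u = pi * real k / real N"
  have "u \<le> pi / 2"
    unfolding u_def using assms by (simp add: field_simps)
  then have "u \<le> 2"
    using pi_less_4 by simp
  have "pi / real N \<le> u"
    unfolding u_def using assms by (simp add: field_simps)
  then have "3 / real N \<le> u"
    using pi_gt3 by (smt (verit) divide_right_mono of_nat_0_le_iff)
  then have "1 / real N \<le> u / 3"
    by simp
  also have "\<dots> \<le> sin u"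
    by (rule sin_ge_third) (use \<open>u \<le> 2\<close> u_def in auto)
  finally show ?thesis
    unfolding u_def .
qed

lemma abs_sin_pi_mult_div_ge:
  fixes k N :: nat
  assumes "0 < k" "k < N"
  shows "1 / real N \<le> \<bar>sin (pi * real k / real N)\<bar>"
proof (cases "2 * k \<le> N")
  case True
  then show ?thesis
    using sin_pi_mult_div_ge[of k N] assms by simp
next
  case False
  have "pi * real k / real N = pi - pi * real (N - k) / real N"
    using assms by (simp add: of_nat_diff diff_divide_distrib algebra_simps)
  then have "sin (pi * real k / real N) = sin (pi * real (N - k) / real N)"
    by simp
  moreover have "1 / real N \<le> sin (pi * real (N - k) / real N)"
    using sin_pi_mult_div_ge[of "N - k" N] assms False by simp
  ultimately show ?thesis
    by simp
qed

lemma abs_sin_pi_diff_div_ge: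
  fixes i j N :: nat
  assumes "i \<le> N" "j \<le> N" "0 < i" "0 < j" "i \<noteq> j"
  shows "1 / real N \<le> \<bar>sin (pi * (real i - real j) / real N)\<bar>"
proof (cases "j < i")
  case True
  then show ?thesis
    using abs_sin_pi_mult_div_ge[of "i - j" N] assms by (simp add: of_nat_diff)
next
  case False
  then have "pi * (real i - real j) / real N = - (pi * real (j - i) / real N)"
    using assms by (simp add: of_nat_diff algebra_simps minus_divide_left)
  then have "sin (pi * (real i - real j) / real N) = - sin (pi * real (j - i) / real N)"
    by simp
  then show ?thesis
    using abs_sin_pi_mult_div_ge[of "j - i" N] assms False by simp
qed

lemma eq_iff_if_close_to_separated:
  fixes w p :: "'a \<Rightarrow> 'b::metric_space"
  assumes close: "\<forall>j\<in>J. dist (w j) (p j) \<le> \<delta>"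
    and sep: "\<forall>i\<in>J. \<forall>j\<in>J. i \<noteq> j \<longrightarrow> 2 * \<delta> < dist (p i) (p j)"
    and "i \<in> J" "j \<in> J"
  shows "w i = w j \<longleftrightarrow> i = j"
proof
  assume "w i = w j"
  then have "dist (p i) (p j) \<le> dist (p i) (w i) + dist (w j) (p j)"
    using dist_triangle[of "p i" "p j" "w i"] by simp
  also have "\<dots> \<le> 2 * \<delta>"
    using close assms(3,4) by (auto simp: dist_commute intro: add_mono[of _ \<delta> _ \<delta>, simplified])
  finally have "dist (p i) (p j) \<le> 2 * \<delta>" .
  then show "i = j"
    using sep assms(3,4) by force
qed simp

section \<open>The approximate critical points\<close>

lemma nine_add_le_mult_pow:
  fixes m n :: nat
  assumes "2 \<le> m" "m \<le> n" "5 \<le> m + n"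
  shows "9 * (m + n) \<le> m * 2 ^ m * n ^ 2"
proof (cases "m = 2")
  case True
  then have "3 \<le> n" using assms by simp
  moreover have "3 * n \<le> n * n"
    using \<open>3 \<le> n\<close> by (intro mult_right_mono) auto
  moreover have "9 * (m + n) = 18 + 9 * n"
    using True by simp
  ultimately have "9 * (m + n) \<le> 8 * (n * n)"
    by linarith
  then show ?thesis using True by (simp add: power2_eq_square)
next
  case False
  then have "2 ^ 3 \<le> (2::nat) ^ m"
    using assms by (intro power_increasing) auto
  then have "2 * 8 \<le> m * 2 ^ m"
    using mult_mono[of 2 m 8 "2 ^ m"] assms by simp
  then have "16 * (n * n) \<le> m * 2 ^ m * (n * n)"
    by (intro mult_right_mono) auto
  moreover have "2 * n \<le> n * n"
    using assms by (intro mult_right_mono) auto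
  then have "9 * (m + n) \<le> 16 * (n * n)"
    using assms unfolding distrib_left by linarith
  ultimately show ?thesis
    unfolding power2_eq_square by linarith
qed

lemma eighteen_add_le_mult_pow:
  fixes m n :: nat
  assumes "2 \<le> n" "n < m"
  shows "18 * (m + n) \<le> m * 2 ^ m * n ^ 2"
proof (cases "m = 3")
  case True
  then have "n = 2" using assms by simp
  then show ?thesis using True by simp
next
  case False
  then have "2 ^ 4 \<le> (2::nat) ^ m"
    using assms by (intro power_increasing) auto
  moreover have "4 \<le> n * n"
    using assms mult_mono[of 2 n 2 n] by simp
  ultimately have "m * 16 * 4 \<le> m * 2 ^ m * (n * n)"
    by (intro mult_mono) auto
  moreover have "18 * (m + n) \<le> m * 16 * 4"
    using assms by simp
  ultimately show ?thesis
    unfolding power2_eq_square by linarith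
qed

lemma r0_pos: "0 < m \<Longrightarrow> 0 < n \<Longrightarrow> 0 < r0 m n"
  unfolding r0_def by simp

lemma r0_power: "0 < m \<Longrightarrow> 0 < n \<Longrightarrow> r0 m n ^ (m + n) = real n / real m"
  unfolding r0_def by (simp add: powr_realpow[symmetric] powr_powr)

lemma r0_ge_half:
  assumes "0 < m" "0 < n"
  shows "1/2 \<le> r0 m n"
proof (rule ccontr)
  assume "\<not> 1/2 \<le> r0 m n"
  then have "r0 m n ^ (m + n) < (1/2) ^ (m + n)"
    using r0_pos[OF assms] assms by (intro power_strict_mono) auto
  then have "real n * 2 ^ (m + n) < real m"
    using assms by (simp add: r0_power power_divide field_simps)
  then have "real (n * 2 ^ (m + n)) < real m"
    by simp
  then have "n * 2 ^ (m + n) < m"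
    by (simp only: of_nat_less_iff)
  moreover have "m < 2 ^ (m + n)"
  proof -
    have "2 ^ m \<le> (2::nat) ^ (m + n)"
      by (intro power_increasing) auto
    then show ?thesis using less_exp[of m] by linarith
  qed
  moreover have "2 ^ (m + n) \<le> n * 2 ^ (m + n)"
    using assms by simp
  ultimately show False
    by linarith
qed

lemma r0_ge_one: "0 < m \<Longrightarrow> m \<le> n \<Longrightarrow> 1 \<le> r0 m n"
  unfolding r0_def by (intro ge_one_powr_ge_zero) auto

lemma r0_parameter_bound:
  assumes "2 \<le> m" "2 \<le> n" "5 \<le> m + n"
  shows "9 * real (m + n) \<le> real m * r0 m n * 2 ^ m * real n ^ 2"
proof (cases "m \<le> n")
  case True
  have "real (9 * (m + n)) \<le> real (m * 2 ^ m * n ^ 2)"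
    using nine_add_le_mult_pow[OF assms(1) True assms(3)] by (simp only: of_nat_le_iff)
  then have "9 * real (m + n) \<le> real m * 1 * 2 ^ m * real n ^ 2"
    by simp
  also have "\<dots> \<le> real m * r0 m n * 2 ^ m * real n ^ 2"
    using r0_ge_one[OF _ True] assms by (intro mult_right_mono mult_left_mono) auto
  finally show ?thesis .
next
  case False
  have "real (18 * (m + n)) \<le> real (m * 2 ^ m * n ^ 2)"
    using eighteen_add_le_mult_pow[OF assms(2)] False by (simp only: of_nat_le_iff)
  then have "18 * real (m + n) \<le> real m * 2 ^ m * real n ^ 2"
    by simp
  then have "9 * real (m + n) \<le> real m * (1/2) * 2 ^ m * real n ^ 2"
    by simp
  also have "\<dots> \<le> real m * r0 m n * 2 ^ m * real n ^ 2"
    using r0_ge_half assms by (intro mult_right_mono mult_left_mono) auto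
  finally show ?thesis .
qed

lemma r0_div_norm_bounds:
  fixes lam :: complex
  assumes "2 \<le> m" "2 \<le> n" "5 \<le> m + n" "0 < cmod lam" "cmod lam < 1 / (2 ^ m * real n ^ 2)"
  shows "2 * real n ^ 2 \<le> r0 m n / cmod lam"
    and "9 * real (m + n) \<le> real m * (r0 m n / cmod lam)"
proof -
  have "r0 m n * 2 ^ m * real n ^ 2 \<le> r0 m n / cmod lam"
    using assms(4,5) r0_pos[of m n] assms(1,2) by (simp add: field_simps)
  moreover have "2 * real n ^ 2 \<le> r0 m n * 2 ^ m * real n ^ 2"
  proof -
    have "(2::real) ^ 2 \<le> 2 ^ m"
      using assms(1) by (intro power_increasing) auto
    then have "1/2 * 4 \<le> r0 m n * 2 ^ m"
      using r0_ge_half[of m n] assms(1,2) by (intro mult_mono) auto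
    then show ?thesis
      by (intro mult_right_mono) auto
  qed
  ultimately show "2 * real n ^ 2 \<le> r0 m n / cmod lam"
    by linarith
  show "9 * real (m + n) \<le> real m * (r0 m n / cmod lam)"
    using r0_parameter_bound[OF assms(1-3)] mult_left_mono[OF \<open>r0 m n * 2 ^ m * real n ^ 2 \<le> _\<close>, of "real m"]
    by (simp add: mult.assoc)
qed

lemma w_tilde_eq_cis:
  "0 < j \<Longrightarrow> w_tilde m n lam j = of_real (r0 m n) / lam * cis (pi * (2 * real j - 1) / real (m + n))"
  unfolding w_tilde_def cis_conv_exp by (simp add: of_nat_diff field_simps)

lemma norm_w_tilde: "0 < j \<Longrightarrow> cmod (w_tilde m n lam j) = r0 m n / cmod lam"
  unfolding w_tilde_eq_cis by (simp add: norm_mult norm_divide r0_def)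

lemma w_tilde_power:
  assumes "0 < m" "0 < n" "0 < j" "lam \<noteq> 0"
  shows "lam ^ (m + n) * w_tilde m n lam j ^ (m + n) = - (of_nat n / of_nat m)"
proof -
  have "real (m + n) * (pi * (2 * real j - 1) / real (m + n)) = real (2 * j - 1) * pi"
    using assms by (simp add: of_nat_diff del: of_nat_add)
  then have "cis (pi * (2 * real j - 1) / real (m + n)) ^ (m + n) = cis (real (2 * j - 1) * pi)"
    unfolding Complex.DeMoivre by simp
  also have "\<dots> = cis pi ^ (2 * j - 1)"
    by (rule Complex.DeMoivre[symmetric])
  also have "\<dots> = -1"
    using assms(3) by simp
  finally have "(lam * w_tilde m n lam j) ^ (m + n) = - of_real (r0 m n ^ (m + n))"
    unfolding w_tilde_eq_cis[OF assms(3)] using assms(4) by (simp add: power_mult_distrib)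
  then show ?thesis
    by (simp add: power_mult_distrib r0_power[OF assms(1,2)])
qed

lemma norm_w_tilde_diff_ge:
  assumes "0 < m" "0 < n" "i \<in> {1..m + n}" "j \<in> {1..m + n}" "i \<noteq> j"
  shows "2 * (r0 m n / cmod lam) / real (m + n) \<le> cmod (w_tilde m n lam i - w_tilde m n lam j)"
proof -
  define N where "N = m + n"
  define ti where "ti = pi * (2 * real i - 1) / real N"
  define tj where "tj = pi * (2 * real j - 1) / real N"
  have N_pos: "0 < real N"
    using assms unfolding N_def by simp
  have "cmod (cis ti - cis tj) = cmod (cis (ti - tj) - 1)"
  proof -
    have "cis ti - cis tj = cis tj * (cis (ti - tj) - 1)"
      by (simp add: cis_mult right_diff_distrib)
    then show ?thesis by (simp add: norm_mult)
  qed
  also have "\<dots> = 2 * \<bar>sin ((ti - tj) / 2)\<bar>"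
    unfolding cis_conv_exp by (rule dist_exp_i_1)
  also have "(ti - tj) / 2 = pi * (real i - real j) / real N"
    unfolding ti_def tj_def using N_pos by (simp add: field_simps)
  finally have cis_diff: "cmod (cis ti - cis tj) = 2 * \<bar>sin (pi * (real i - real j) / real N)\<bar>" .
  have "w_tilde m n lam i - w_tilde m n lam j = of_real (r0 m n) / lam * (cis ti - cis tj)"
    using assms by (simp add: w_tilde_eq_cis ti_def tj_def N_def right_diff_distrib)
  then have "cmod (w_tilde m n lam i - w_tilde m n lam j)
      = r0 m n / cmod lam * (2 * \<bar>sin (pi * (real i - real j) / real N)\<bar>)"
    using r0_pos[OF assms(1,2)] by (simp add: norm_mult norm_divide cis_diff)
  moreover have "2 / real N \<le> 2 * \<bar>sin (pi * (real i - real j) / real N)\<bar>"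
    using abs_sin_pi_diff_div_ge[of i N j] assms unfolding N_def by simp
  then have "r0 m n / cmod lam * (2 / real N)
      \<le> r0 m n / cmod lam * (2 * \<bar>sin (pi * (real i - real j) / real N)\<bar>)"
    using r0_pos[OF assms(1,2)] by (intro mult_left_mono) auto
  ultimately show ?thesis
    unfolding N_def by (simp add: ac_simps)
qed

section \<open>A fixed-point equation for the critical points\<close>

definition crit_K :: "nat \<Rightarrow> nat \<Rightarrow> complex \<Rightarrow> complex" where
  "crit_K m n z = of_nat m * z * (1 + z) ^ (n - 1)"

definition crit_R :: "nat \<Rightarrow> nat \<Rightarrow> complex \<Rightarrow> complex" where
  "crit_R m n z = of_nat (m + n) * ((1 + z) ^ (n - 1) + of_nat (n - 1))"

lemma E_lam_rescaled:
  fixes lam a t :: complex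
  assumes "0 < m" "0 < n" and a: "lam ^ (m + n) * a ^ (m + n) = - (of_nat n / of_nat m)"
  defines "z \<equiv> a * (1 + t)"
  shows "of_nat m * z * E_lam m n lam z
           = crit_K m n z - (1 + t) ^ (m + n) * (crit_K m n z + crit_R m n z)"
proof -
  define B where
    "B = (1 + of_nat m / of_nat n) * ((1 + z) ^ n + of_nat n - 1) - z * (1 + z) ^ (n - 1)"
  have lam_z: "lam ^ (m + n) * z ^ (m + n) = - (of_nat n / of_nat m) * (1 + t) ^ (m + n)"
    using a unfolding z_def by (simp add: power_mult_distrib mult.assoc[symmetric])
  have "z ^ (m + n - 1) * z = z ^ (m + n)"
    using assms(2) by (simp add: power_Suc2[symmetric])
  moreover have "of_nat m * z * E_lam m n lam z
      = of_nat m * z * (1 + z) ^ (n - 1) + of_nat m * (lam ^ (m + n) * (z ^ (m + n - 1) * z)) * B"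
    unfolding E_lam_def B_def by (simp add: algebra_simps)
  ultimately have "of_nat m * z * E_lam m n lam z
      = of_nat m * z * (1 + z) ^ (n - 1) + of_nat m * (lam ^ (m + n) * z ^ (m + n)) * B"
    by simp
  also have "\<dots> = crit_K m n z - (1 + t) ^ (m + n) * (of_nat n * B)"
    unfolding lam_z crit_K_def using assms(1) by simp
  also have "of_nat n * B = crit_K m n z + crit_R m n z"
  proof -
    have "(1 + z) ^ n = (1 + z) * (1 + z) ^ (n - 1)"
      using assms(2) by (simp add: power_Suc[symmetric])
    then show ?thesis
      unfolding B_def crit_K_def crit_R_def using assms(1,2) by (simp add: field_simps of_nat_diff)
  qed
  finally show ?thesis .
qed

lemma crit_R_div_crit_K_bound:
  fixes z :: complex
  assumes "0 < m" "2 \<le> n" and z: "5 * real n - 4 \<le> cmod z"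
  shows "crit_K m n z \<noteq> 0"
    and "cmod (crit_R m n z / crit_K m n z) \<le> 6 / 5 * real (m + n) / (real m * cmod z)"
proof -
  have "cmod z - 1 \<le> cmod (1 + z)"
    using norm_triangle_ineq2[of z "-1"] by (simp add: add.commute)
  then have big: "5 * real (n - 1) \<le> cmod (1 + z)"
    using z assms(2) by (simp add: of_nat_diff)
  then have one: "1 \<le> cmod (1 + z)"
    using assms(2) by linarith
  define q where "q = cmod (1 + z) ^ (n - 1)"
  have "cmod (1 + z) \<le> q"
    unfolding q_def using power_increasing[OF _ one, of 1 "n - 1"] assms(2) by simp
  then have q_pos: "0 < q" and small: "real (n - 1) \<le> q / 5"
    using one big by linarith+
  have z_pos: "0 < cmod z"
    using z assms(2) by linarith
  have K: "cmod (crit_K m n z) = real m * cmod z * q"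
    unfolding crit_K_def q_def by (simp add: norm_mult norm_power)
  then show "crit_K m n z \<noteq> 0"
    using assms(1) q_pos z_pos by auto
  have "cmod (crit_R m n z) \<le> real (m + n) * (q + real (n - 1))"
    unfolding crit_R_def q_def norm_mult norm_of_nat
    by (intro mult_left_mono order_trans[OF norm_triangle_ineq]) (auto simp: norm_power)
  also have "\<dots> \<le> real (m + n) * (6 / 5 * q)"
    using small by (intro mult_left_mono) auto
  finally have R: "cmod (crit_R m n z) \<le> real (m + n) * (6 / 5 * q)" .
  have "cmod (crit_R m n z / crit_K m n z) \<le> real (m + n) * (6 / 5 * q) / (real m * cmod z * q)"
    unfolding norm_divide K using R assms(1) q_pos z_pos by (intro divide_right_mono) auto
  then show "cmod (crit_R m n z / crit_K m n z) \<le> 6 / 5 * real (m + n) / (real m * cmod z)"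
    using q_pos by (simp add: mult.commute)
qed

text \<open>
  By E_lam_rescaled, E (a (1 + t)) = 0 means N t = -((1 + t)^N R/K + ((1 + t)^N - 1 - N t)),
  and both terms on the right are small near t = 0.
\<close>

definition crit_map :: "nat \<Rightarrow> nat \<Rightarrow> complex \<Rightarrow> complex \<Rightarrow> complex" where
  "crit_map m n a t =
     - ((1 + t) ^ (m + n) * (crit_R m n (a * (1 + t)) / crit_K m n (a * (1 + t)))
        + ((1 + t) ^ (m + n) - 1 - of_nat (m + n) * t)) / of_nat (m + n)"

lemma E_lam_eq_0_of_crit_map_fixed:
  fixes lam a t :: complex
  assumes "0 < m" "0 < n" and a: "lam ^ (m + n) * a ^ (m + n) = - (of_nat n / of_nat m)"
    and K: "crit_K m n (a * (1 + t)) \<noteq> 0" and fixed: "crit_map m n a t = t"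
  shows "E_lam m n lam (a * (1 + t)) = 0"
proof -
  define z where "z = a * (1 + t)"
  define P where "P = (1 + t) ^ (m + n)"
  have "- (P * (crit_R m n z / crit_K m n z) + (P - 1 - of_nat (m + n) * t)) = t * of_nat (m + n)"
    using fixed assms(2) unfolding crit_map_def z_def[symmetric] P_def[symmetric]
    by (simp add: divide_eq_eq del: of_nat_add)
  then have "P * (crit_R m n z / crit_K m n z) + P - 1 = 0"
    by (simp add: algebra_simps)
  then have "crit_K m n z - P * (crit_K m n z + crit_R m n z) = 0"
    using K unfolding z_def[symmetric] by (simp add: field_simps)
  then have "of_nat m * z * E_lam m n lam z = 0"
    using E_lam_rescaled[OF assms(1,2) a, of t] unfolding z_def P_def by simp
  moreover have "z \<noteq> 0"
    using K unfolding crit_K_def z_def by auto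
  ultimately show ?thesis
    using assms(1) unfolding z_def by simp
qed

lemma self_map_numeric_bound:
  fixes y s P :: real
  assumes "0 \<le> y" "y \<le> 5/18" "0 \<le> s" "s \<le> 1/18" "0 \<le> P" "P * (1 - y) \<le> 1"
  shows "P * (12/25 * y / (1 - s) + y ^ 2 / 2) \<le> y"
proof -
  have "P * (13/18) \<le> P * (1 - y)"
    using assms by (intro mult_left_mono) auto
  then have "P \<le> 18/13"
    using assms by simp
  moreover have "12/25 / (1 - s) \<le> 216/425"
    using assms by (simp add: field_simps)
  then have "12/25 / (1 - s) + y / 2 \<le> 216/425 + 5/36"
    using assms by simp
  ultimately have "P * (12/25 / (1 - s) + y / 2) \<le> 18/13 * (216/425 + 5/36)"
    using assms by (intro mult_mono) auto
  also have "\<dots> \<le> 1" by simp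
  finally have "y * (P * (12/25 / (1 - s) + y / 2)) \<le> y"
    using mult_left_mono[of _ 1 y] assms(1) by simp
  then show ?thesis
    by (simp add: algebra_simps power2_eq_square)
qed

section \<open>Existence of a critical point near each vertex\<close>

locale crit_point_near =
  fixes m n :: nat and a :: complex
  assumes m_ge_2: "2 \<le> m" and n_ge_2: "2 \<le> n" and mn_ge_5: "5 \<le> m + n"
    and norm_a_ge: "2 * real n ^ 2 \<le> cmod a"
    and m_norm_a_ge: "9 * real (m + n) \<le> real m * cmod a"
begin

definition rad :: real where
  "rad = 5 / (2 * real m * cmod a)"

lemma norm_a_ge_8: "8 \<le> cmod a"
proof -
  have "2 * 2 ^ 2 \<le> 2 * real n ^ 2"
    using n_ge_2 by (intro mult_left_mono power_mono) auto
  then show ?thesis using norm_a_ge by simp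
qed

lemma rad_pos: "0 < rad"
  unfolding rad_def using m_ge_2 norm_a_ge_8 by (auto intro!: divide_pos_pos mult_pos_pos)

lemma norm_a_mult_rad: "cmod a * rad = 5 / (2 * real m)"
proof -
  have "cmod a \<noteq> 0" using norm_a_ge_8 by linarith
  then show ?thesis unfolding rad_def by simp
qed

lemma m_norm_a_eq: "real m * cmod a = 5 / (2 * rad)"
  unfolding rad_def using m_ge_2 norm_a_ge_8 by simp

lemma card_mult_rad_le: "real (m + n) * rad \<le> 5/18"
proof -
  have "real (m + n) * rad = 5 * real (m + n) / (2 * (real m * cmod a))"
    unfolding rad_def by (simp add: algebra_simps)
  also have "\<dots> \<le> 5 * real (m + n) / (2 * (9 * real (m + n)))"
    using m_norm_a_ge mn_ge_5 by (intro divide_left_mono mult_left_mono) auto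
  also have "\<dots> = 5/18"
    using mn_ge_5 m_ge_2 by (simp del: of_nat_add)
  finally show ?thesis .
qed

lemma rad_le: "rad \<le> 1/18"
proof -
  have "5 * rad \<le> real (m + n) * rad"
    using mn_ge_5 rad_pos by (intro mult_right_mono) auto
  then show ?thesis using card_mult_rad_le by simp
qed

lemma norm_scaled_ge:
  assumes "cmod t \<le> rad"
  shows "cmod a * (1 - rad) \<le> cmod (a * (1 + t))"
    and "5 * real n - 4 \<le> cmod a * (1 - rad)"
proof -
  have "1 - rad \<le> cmod (1 + t)"
    using assms norm_triangle_ineq2[of 1 "-t"] by simp
  then show "cmod a * (1 - rad) \<le> cmod (a * (1 + t))"
    unfolding norm_mult by (rule mult_left_mono) simp
  have "cmod a * rad \<le> 5/4"
    unfolding norm_a_mult_rad using m_ge_2 by (simp add: field_simps)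
  moreover have "5 * real n - 4 + 5/4 \<le> 2 * real n ^ 2"
  proof -
    have "0 \<le> (real n - 2) * (real n - 1/2)"
      using n_ge_2 by (intro mult_nonneg_nonneg) auto
    then show ?thesis
      by (simp add: power2_eq_square algebra_simps)
  qed
  ultimately show "5 * real n - 4 \<le> cmod a * (1 - rad)"
    using norm_a_ge by (simp add: algebra_simps)
qed

lemma crit_K_nonzero_and_ratio_bound:
  assumes "cmod t \<le> rad"
  shows "crit_K m n (a * (1 + t)) \<noteq> 0"
    and "cmod (crit_R m n (a * (1 + t)) / crit_K m n (a * (1 + t)))
           \<le> 12/25 * (real (m + n) * rad) / (1 - rad)"
proof -
  note big = order_trans[OF norm_scaled_ge(2,1)[OF assms]]
  have m: "0 < m" using m_ge_2 by simp
  show "crit_K m n (a * (1 + t)) \<noteq> 0"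
    using crit_R_div_crit_K_bound(1)[OF m n_ge_2 big] .
  have pos: "0 < real m * (cmod a * (1 - rad))"
    using m rad_le norm_a_ge_8 by (intro mult_pos_pos) auto
  have "cmod (crit_R m n (a * (1 + t)) / crit_K m n (a * (1 + t)))
      \<le> 6/5 * real (m + n) / (real m * cmod (a * (1 + t)))"
    using crit_R_div_crit_K_bound(2)[OF m n_ge_2 big] .
  also have "\<dots> \<le> 6/5 * real (m + n) / (real m * (cmod a * (1 - rad)))"
  proof (rule divide_left_mono)
    show le: "real m * (cmod a * (1 - rad)) \<le> real m * cmod (a * (1 + t))"
      using norm_scaled_ge(1)[OF assms] by (rule mult_left_mono) simp
    show "0 < real m * cmod (a * (1 + t)) * (real m * (cmod a * (1 - rad)))"
    proof (rule mult_pos_pos)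
      show "0 < real m * cmod (a * (1 + t))" using pos le by linarith
    qed (rule pos)
  qed simp
  also have "real m * (cmod a * (1 - rad)) = 5 * (1 - rad) / (2 * rad)"
    using m_norm_a_eq by (simp add: mult.assoc[symmetric])
  also have "6/5 * real (m + n) / (5 * (1 - rad) / (2 * rad))
      = 12/25 * (real (m + n) * rad) / (1 - rad)"
    using rad_pos rad_le by (simp add: field_simps)
  finally show "cmod (crit_R m n (a * (1 + t)) / crit_K m n (a * (1 + t)))
           \<le> 12/25 * (real (m + n) * rad) / (1 - rad)" .
qed

lemma continuous_on_crit_map: "continuous_on (cball 0 rad) (crit_map m n a)"
proof -
  have "continuous_on (cball 0 rad) (\<lambda>t. crit_R m n (a * (1 + t)))"
    and "continuous_on (cball 0 rad) (\<lambda>t. crit_K m n (a * (1 + t)))"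
    unfolding crit_R_def crit_K_def by (intro continuous_intros)+
  moreover have "\<forall>t\<in>cball 0 rad. crit_K m n (a * (1 + t)) \<noteq> 0"
    using crit_K_nonzero_and_ratio_bound(1) by simp
  ultimately show ?thesis
    unfolding crit_map_def using mn_ge_5 by (intro continuous_intros) (auto simp del: of_nat_add)
qed


lemma norm_crit_map_le:
  assumes t: "cmod t \<le> rad"
  shows "cmod (crit_map m n a t) \<le> rad"
proof -
  define N where "N = m + n"
  define y where "y = real N * rad"
  define P where "P = (1 + rad) ^ N"
  have N_pos: "0 < real N"
    using mn_ge_5 unfolding N_def by simp
  have P_nonneg: "0 \<le> P"
    unfolding P_def using rad_pos by simp
  have P_bound: "P * (1 - y) \<le> 1"
    unfolding P_def y_def using one_plus_power_mult_one_minus_le_one[of rad N] rad_pos rad_le by simp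
  have pow: "cmod ((1 + t) ^ N) \<le> P"
    unfolding P_def norm_power using t by (intro power_mono order_trans[OF norm_triangle_ineq]) auto
  have rem: "cmod ((1 + t) ^ N - 1 - of_nat N * t) \<le> P * (y ^ 2 / 2)"
  proof -
    have "cmod ((1 + t) ^ N - 1 - of_nat N * t) \<le> real N ^ 2 / 2 * cmod t ^ 2 * (1 + cmod t) ^ N"
      by (rule norm_power_one_plus_minus_linear_le)
    also have "\<dots> \<le> real N ^ 2 / 2 * rad ^ 2 * P"
      unfolding P_def using t by (intro mult_mono power_mono) auto
    also have "\<dots> = P * (y ^ 2 / 2)"
      unfolding y_def by (simp add: power_mult_distrib)
    finally show ?thesis .
  qed
  have ratio: "cmod ((1 + t) ^ N * (crit_R m n (a * (1 + t)) / crit_K m n (a * (1 + t))))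
      \<le> P * (12/25 * y / (1 - rad))"
    unfolding norm_mult y_def N_def using pow crit_K_nonzero_and_ratio_bound(2)[OF t] P_nonneg
    unfolding N_def by (intro mult_mono) auto
  have "cmod (crit_map m n a t)
      = cmod ((1 + t) ^ N * (crit_R m n (a * (1 + t)) / crit_K m n (a * (1 + t)))
              + ((1 + t) ^ N - 1 - of_nat N * t)) / real N"
    unfolding crit_map_def N_def[symmetric] norm_divide norm_minus_cancel norm_of_nat ..
  also have "\<dots> \<le> (P * (12/25 * y / (1 - rad)) + P * (y ^ 2 / 2)) / real N"
    using ratio rem by (intro divide_right_mono order_trans[OF norm_triangle_ineq] add_mono) auto
  also have "\<dots> \<le> y / real N"
    using self_map_numeric_bound[of y rad P] card_mult_rad_le rad_pos rad_le P_nonneg P_bound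
    unfolding y_def N_def by (intro divide_right_mono) (auto simp: distrib_left)
  also have "\<dots> = rad"
    unfolding y_def using N_pos by simp
  finally show ?thesis .
qed

lemma E_lam_root_near:
  assumes "lam ^ (m + n) * a ^ (m + n) = - (of_nat n / of_nat m)"
  shows "\<exists>w. E_lam m n lam w = 0 \<and> cmod (w - a) \<le> 5 / (2 * real m)"
proof -
  obtain t where t: "cmod t \<le> rad" and fixed: "crit_map m n a t = t"
    using brouwer_ball[OF rad_pos continuous_on_crit_map] norm_crit_map_le by auto
  have "E_lam m n lam (a * (1 + t)) = 0"
    using E_lam_eq_0_of_crit_map_fixed[OF _ _ assms crit_K_nonzero_and_ratio_bound(1)[OF t] fixed]
      m_ge_2 n_ge_2 by simp
  moreover have "cmod (a * (1 + t) - a) \<le> 5 / (2 * real m)"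
  proof -
    have "cmod (a * (1 + t) - a) = cmod a * cmod t"
      by (simp add: algebra_simps norm_mult)
    also have "\<dots> \<le> cmod a * rad"
      using t by (intro mult_left_mono) auto
    finally show ?thesis
      unfolding norm_a_mult_rad .
  qed
  ultimately show ?thesis by blast
qed

end

lemma E_lam_root_near_w_tilde:
  fixes lam :: complex
  assumes "2 \<le> m" "2 \<le> n" "5 \<le> m + n" "0 < cmod lam" "cmod lam < 1 / (2 ^ m * real n ^ 2)"
    and j: "j \<in> {1..m + n}"
  shows "\<exists>w. E_lam m n lam w = 0 \<and> dist w (w_tilde m n lam j) \<le> 5 / (2 * real m)"
proof -
  have "0 < j"
    using j by simp
  interpret crit_point_near m n "w_tilde m n lam j"
    using assms(1-3) r0_div_norm_bounds[OF assms(1-5)]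
    by unfold_locales (auto simp: norm_w_tilde[OF \<open>0 < j\<close>])
  show ?thesis
    using E_lam_root_near[OF w_tilde_power[OF _ _ \<open>0 < j\<close>]] assms by (auto simp: dist_norm)
qed

lemma w_tilde_separated:
  fixes lam :: complex
  assumes "2 \<le> m" "2 \<le> n" "5 \<le> m + n" "0 < cmod lam" "cmod lam < 1 / (2 ^ m * real n ^ 2)"
    and "i \<in> {1..m + n}" "j \<in> {1..m + n}" "i \<noteq> j"
  shows "5 / real m < dist (w_tilde m n lam i) (w_tilde m n lam j)"
proof -
  define A where "A = r0 m n / cmod lam"
  have "5 / real m < 18 / real m"
    using assms(1) by (simp add: divide_strict_right_mono)
  also have "\<dots> \<le> 2 * A / real (m + n)"
    using r0_div_norm_bounds(2)[OF assms(1-5), folded A_def] assms(1)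
    by (simp add: divide_simps del: of_nat_add) (simp add: algebra_simps)
  also have "\<dots> \<le> dist (w_tilde m n lam i) (w_tilde m n lam j)"
    using norm_w_tilde_diff_ge[OF _ _ assms(6-8)] assms(1,2) by (simp add: dist_norm A_def)
  finally show ?thesis .
qed

theorem lemma4p3:
  fixes m n :: nat and lam :: complex
  assumes "m \<ge> 2" and "n \<ge> 2"
    and "1 / real m + 1 / real n < 1"
    and "0 < cmod lam" and "cmod lam < 1 / (2 ^ m * real n ^ 2)"
  shows "\<exists>w :: nat \<Rightarrow> complex.
           (\<forall>j\<in>{1..m+n}. E_lam m n lam (w j) = 0
              \<and> cmod (w j - w_tilde m n lam j) < 2 * real (m + n) / real m)
         \<and> (\<forall>i\<in>{1..m+n}. \<forall>j\<in>{1..m+n}. w i = w j \<longleftrightarrow> i = j)"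
proof -
  have mn: "5 \<le> m + n"
    using assms(1-3) by (cases "m = 2 \<and> n = 2") auto
  note hyps = assms(1,2) mn assms(4,5)
  have "\<forall>j\<in>{1..m+n}. \<exists>w. E_lam m n lam w = 0 \<and> dist w (w_tilde m n lam j) \<le> 5 / (2 * real m)"
    using E_lam_root_near_w_tilde[OF hyps] by blast
  then obtain w where w: "\<forall>j\<in>{1..m+n}. E_lam m n lam (w j) = 0
                           \<and> dist (w j) (w_tilde m n lam j) \<le> 5 / (2 * real m)"
    by metis
  have sep: "\<forall>i\<in>{1..m+n}. \<forall>j\<in>{1..m+n}.
               i \<noteq> j \<longrightarrow> 2 * (5 / (2 * real m)) < dist (w_tilde m n lam i) (w_tilde m n lam j)"
    using w_tilde_separated[OF hyps] by simp
  have margin: "5 / (2 * real m) < 2 * real (m + n) / real m"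
    using assms(1) mn by (simp add: field_simps)
  show ?thesis
  proof (intro exI[of _ w] conjI ballI)
    fix j assume j: "j \<in> {1..m+n}"
    then show "E_lam m n lam (w j) = 0"
      using w by blast
    have "cmod (w j - w_tilde m n lam j) \<le> 5 / (2 * real m)"
      using w j by (simp add: dist_norm)
    then show "cmod (w j - w_tilde m n lam j) < 2 * real (m + n) / real m"
      using margin by linarith
  next
    fix i j assume "i \<in> {1..m+n}" "j \<in> {1..m+n}"
    then show "w i = w j \<longleftrightarrow> i = j"
      using w sep by (intro eq_iff_if_close_to_separated[of "{1..m+n}"]) auto
  qed
qed

end
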